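(* Let $X$ be a shift space, $Y$ an irreducible shift space, and $\phi : X \to Y$ a code. Then any two of the following conditions imply the third: (1) $\phi$ is open; (2) $\phi$ is constant-to-one; (3) $\phi$ is bi-closing.
   Context: Shift spaces are closed shift-invariant subsets of $\mathcal{A}^{\mathbb{Z}}$ ($\mathcal{A}$ finite); a code is a continuous shift-commuting map. $Y$ is irreducible if for all words $u,v$ occurring in $Y$ there is a word $w$ with $uwv$ occurring in $Y$. Open: images of open sets are open. Constant-to-one: every fiber $\phi^{-1}(y)$ is finite and $|\phi^{-1}(y)|$ does not depend on $y\in Y$. With metric $d(x,\bar x)=2^{-k}$, $k$ maximal with $x_{[-k,k]}=\bar x_{[-k,k]}$, points are left (resp. right) asymptotic if $d(\sigma^{-n}x,\sigma^{-n}\bar x)\to0$ (resp. $d(\sigma^{n}x,\sigma^{n}\bar x)\to0$). $\phi$ is right closing if it never identifies two distinct left asymptotic points, left closing if it never identifies two distinct right asymptotic points, bi-closing if both. *)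

theory Defs
  imports Main
begin

text \<open>Points of the full shift over a finite alphabet 'a are maps int => 'a.
  Two points are within distance 2^(-k) (metric of the paper) iff they agree on [-k,k].\<close>

definition agree :: "nat \<Rightarrow> (int \<Rightarrow> 'a) \<Rightarrow> (int \<Rightarrow> 'a) \<Rightarrow> bool" where
  "agree k x y \<longleftrightarrow> (\<forall>i. - int k \<le> i \<and> i \<le> int k \<longrightarrow> x i = y i)"

definition shiftn :: "int \<Rightarrow> (int \<Rightarrow> 'a) \<Rightarrow> (int \<Rightarrow> 'a)" where
  "shiftn n x = (\<lambda>i. x (i + n))"

abbreviation shift :: "(int \<Rightarrow> 'a) \<Rightarrow> (int \<Rightarrow> 'a)" where
  "shift \<equiv> shiftn 1"

definition shift_closed :: "(int \<Rightarrow> 'a) set \<Rightarrow> bool" where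
  "shift_closed X \<longleftrightarrow> (\<forall>x. (\<forall>k. \<exists>x'\<in>X. agree k x x') \<longrightarrow> x \<in> X)"

definition shift_space :: "(int \<Rightarrow> 'a::finite) set \<Rightarrow> bool" where
  "shift_space X \<longleftrightarrow> shift_closed X \<and> shift ` X = X"

definition occurs :: "'a list \<Rightarrow> (int \<Rightarrow> 'a) set \<Rightarrow> bool" where
  "occurs w Y \<longleftrightarrow> (\<exists>y\<in>Y. \<exists>i. \<forall>j<length w. y (i + int j) = w ! j)"

definition irreducible_shift :: "(int \<Rightarrow> 'a) set \<Rightarrow> bool" where
  "irreducible_shift Y \<longleftrightarrow>
     (\<forall>u v. occurs u Y \<and> occurs v Y \<longrightarrow> (\<exists>w. occurs (u @ w @ v) Y))"

definition shift_open_in :: "(int \<Rightarrow> 'a) set \<Rightarrow> (int \<Rightarrow> 'a) set \<Rightarrow> bool" where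
  "shift_open_in X U \<longleftrightarrow> U \<subseteq> X \<and> (\<forall>x\<in>U. \<exists>k. \<forall>x'\<in>X. agree k x x' \<longrightarrow> x' \<in> U)"

definition shift_continuous_on :: "(int \<Rightarrow> 'a) set \<Rightarrow> ((int \<Rightarrow> 'a) \<Rightarrow> (int \<Rightarrow> 'b)) \<Rightarrow> bool" where
  "shift_continuous_on X \<phi> \<longleftrightarrow>
     (\<forall>x\<in>X. \<forall>k. \<exists>m. \<forall>x'\<in>X. agree m x x' \<longrightarrow> agree k (\<phi> x) (\<phi> x'))"

definition is_code ::
  "(int \<Rightarrow> 'a) set \<Rightarrow> (int \<Rightarrow> 'b) set \<Rightarrow> ((int \<Rightarrow> 'a) \<Rightarrow> (int \<Rightarrow> 'b)) \<Rightarrow> bool" where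
  "is_code X Y \<phi> \<longleftrightarrow> \<phi> ` X \<subseteq> Y \<and> shift_continuous_on X \<phi> \<and>
     (\<forall>x\<in>X. \<phi> (shift x) = shift (\<phi> x))"

definition open_code ::
  "(int \<Rightarrow> 'a) set \<Rightarrow> (int \<Rightarrow> 'b) set \<Rightarrow> ((int \<Rightarrow> 'a) \<Rightarrow> (int \<Rightarrow> 'b)) \<Rightarrow> bool" where
  "open_code X Y \<phi> \<longleftrightarrow> (\<forall>U. shift_open_in X U \<longrightarrow> shift_open_in Y (\<phi> ` U))"

definition constant_to_one ::
  "(int \<Rightarrow> 'a) set \<Rightarrow> (int \<Rightarrow> 'b) set \<Rightarrow> ((int \<Rightarrow> 'a) \<Rightarrow> (int \<Rightarrow> 'b)) \<Rightarrow> bool" where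
  "constant_to_one X Y \<phi> \<longleftrightarrow>
     (\<exists>n. \<forall>y\<in>Y. finite {x\<in>X. \<phi> x = y} \<and> card {x\<in>X. \<phi> x = y} = n)"

definition left_asymptotic :: "(int \<Rightarrow> 'a) \<Rightarrow> (int \<Rightarrow> 'a) \<Rightarrow> bool" where
  "left_asymptotic x x' \<longleftrightarrow>
     (\<forall>k. \<exists>N. \<forall>n\<ge>N. agree k (shiftn (- int n) x) (shiftn (- int n) x'))"

definition right_asymptotic :: "(int \<Rightarrow> 'a) \<Rightarrow> (int \<Rightarrow> 'a) \<Rightarrow> bool" where
  "right_asymptotic x x' \<longleftrightarrow>
     (\<forall>k. \<exists>N. \<forall>n\<ge>N. agree k (shiftn (int n) x) (shiftn (int n) x'))"

definition right_closing ::
  "(int \<Rightarrow> 'a) set \<Rightarrow> ((int \<Rightarrow> 'a) \<Rightarrow> (int \<Rightarrow> 'b)) \<Rightarrow> bool" where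
  "right_closing X \<phi> \<longleftrightarrow>
     (\<forall>x\<in>X. \<forall>x'\<in>X. x \<noteq> x' \<and> left_asymptotic x x' \<longrightarrow> \<phi> x \<noteq> \<phi> x')"

definition left_closing ::
  "(int \<Rightarrow> 'a) set \<Rightarrow> ((int \<Rightarrow> 'a) \<Rightarrow> (int \<Rightarrow> 'b)) \<Rightarrow> bool" where
  "left_closing X \<phi> \<longleftrightarrow>
     (\<forall>x\<in>X. \<forall>x'\<in>X. x \<noteq> x' \<and> right_asymptotic x x' \<longrightarrow> \<phi> x \<noteq> \<phi> x')"

definition bi_closing ::
  "(int \<Rightarrow> 'a) set \<Rightarrow> ((int \<Rightarrow> 'a) \<Rightarrow> (int \<Rightarrow> 'b)) \<Rightarrow> bool" where
  "bi_closing X \<phi> \<longleftrightarrow> right_closing X \<phi> \<and> left_closing X \<phi>"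

end

theory Submission
  imports Defs "HOL-Library.FuncSet" "HOL-Library.Infinite_Set"
begin

text \<open>By compactness, a code is bi-closing iff it is separating: for some N, two points of
  the same fibre that agree on [-N, N] are equal. A separating code has finite fibres that
  inject into their sets of central N-blocks. For every code the set of central K-blocks of the
  fibre over y is upper semicontinuous in y, and for an open code it is also lower
  semicontinuous. Hence for an open bi-closing code the fibre cardinality is locally constant and
  shift invariant, so constant on the irreducible Y; for a constant-to-one bi-closing code upper
  semicontinuity and equal cardinalities force nearby fibres to carry the same blocks, which gives
  openness; and for an open constant-to-one code a nearby fibre of the same cardinality carries
  all blocks of a given one, so fibres are locally separated by a fixed window, which
  compactness makes global.\<close>

lemma agree_refl [simp]: "agree k x x"
  by (simp add: agree_def)

lemma agree_sym: "agree k x y \<Longrightarrow> agree k y x"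
  by (simp add: agree_def)

lemma agree_trans: "agree k x y \<Longrightarrow> agree k y z \<Longrightarrow> agree k x z"
  by (simp add: agree_def)

lemma agree_mono: "agree k x y \<Longrightarrow> j \<le> k \<Longrightarrow> agree j x y"
  by (auto simp: agree_def)

lemma agreeD: "agree k x y \<Longrightarrow> \<bar>i\<bar> \<le> int k \<Longrightarrow> x i = y i"
  by (simp add: agree_def abs_le_iff)

lemma eq_if_agree_all: "(\<And>k. agree k x y) \<Longrightarrow> x = y"
  by (metis agreeD abs_ge_zero nat_0_le ext order_refl)

lemma agree_pair_iff:
  "agree k (\<lambda>i. (x i, x' i)) (\<lambda>i. (y i, y' i)) \<longleftrightarrow> agree k x y \<and> agree k x' y'"
  by (auto simp: agree_def)

abbreviation central_block :: "nat \<Rightarrow> (int \<Rightarrow> 'a) \<Rightarrow> int \<Rightarrow> 'a" where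
  "central_block k x \<equiv> restrict x {- int k..int k}"

lemma central_block_eq_iff: "central_block k x = central_block k y \<longleftrightarrow> agree k x y"
  by (auto simp: agree_def fun_eq_iff)

lemma finite_central_blocks: "finite (central_block k ` (S :: (int \<Rightarrow> 'a::finite) set))"
proof (rule finite_subset)
  show "central_block k ` S \<subseteq> PiE {- int k..int k} (\<lambda>_. UNIV)"
    by auto
qed (simp add: finite_PiE)

lemma finite_imp_inj_on_central_block:
  fixes F :: "(int \<Rightarrow> 'a) set"
  assumes "finite F"
  shows "\<exists>K. inj_on (central_block K) F"
proof -
  define sep where "sep x y = (SOME k. \<not> agree k x y)" for x y :: "int \<Rightarrow> 'a"
  have sep: "x = y \<or> \<not> agree (sep x y) x y" for x y
    unfolding sep_def by (metis (mono_tags) someI_ex eq_if_agree_all)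
  define K where "K = Max (insert 0 ((\<lambda>(x, y). sep x y) ` (F \<times> F)))"
  have "sep x y \<le> K" if "x \<in> F" "y \<in> F" for x y
    unfolding K_def using assms that by (intro Max_ge) auto
  then have "inj_on (central_block K) F"
    unfolding inj_on_def central_block_eq_iff by (metis sep agree_mono)
  then show ?thesis ..
qed

section \<open>Compactness of the full shift\<close>

definition cluster_point :: "(nat \<Rightarrow> int \<Rightarrow> 'a) \<Rightarrow> (int \<Rightarrow> 'a) \<Rightarrow> bool" where
  "cluster_point f z \<longleftrightarrow> (\<forall>k M. \<exists>n\<ge>M. agree k (f n) z)"

lemma infinite_subset_constant:
  assumes "infinite T" and "finite (g ` T)"
  shows "\<exists>T'\<subseteq>T. infinite T' \<and> (\<forall>n\<in>T'. \<forall>m\<in>T'. g n = g m)"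
proof -
  obtain n0 where "n0 \<in> T" and "infinite {n\<in>T. g n = g n0}"
    using pigeonhole_infinite[OF assms] by blast
  then show ?thesis
    by (intro exI[of _ "{n\<in>T. g n = g n0}"]) auto
qed

lemma cluster_point_exists:
  fixes f :: "nat \<Rightarrow> int \<Rightarrow> 'a::finite"
  shows "\<exists>z. cluster_point f z"
proof -
  have "\<exists>T'\<subseteq>T. infinite T' \<and> (\<forall>n\<in>T'. \<forall>m\<in>T'. agree k (f n) (f m))"
    if "infinite T" for T :: "nat set" and k
  proof -
    have "finite ((\<lambda>n. central_block k (f n)) ` T)"
      using finite_central_blocks[of k "f ` T"] by (simp add: image_image)
    from infinite_subset_constant[OF that this] show ?thesis
      by (simp add: central_block_eq_iff)
  qed
  then obtain refine where refine: "\<And>T k. infinite T \<Longrightarrow> refine T k \<subseteq> T \<and>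
      infinite (refine T k) \<and> (\<forall>n\<in>refine T k. \<forall>m\<in>refine T k. agree k (f n) (f m))"
    by metis
  define S where "S = rec_nat UNIV (\<lambda>k T. refine T k)"
  have S_Suc: "S (Suc k) = refine (S k) k" for k
    by (simp add: S_def)
  have inf: "infinite (S k)" for k
    by (induction k) (simp_all add: S_def refine)
  have dec: "S k \<subseteq> S j" if "j \<le> k" for j k
    using that by (induction rule: dec_induct) (use S_Suc refine inf in blast)+
  have const: "agree k (f n) (f m)" if "n \<in> S (Suc k)" "m \<in> S (Suc k)" for n m k
    using that refine[OF inf[of k]] by (simp add: S_Suc)
  define z where "z i = f (SOME n. n \<in> S (Suc (nat \<bar>i\<bar>))) i" for i
  have "agree k (f n) z" if "n \<in> S (Suc k)" for n k
    unfolding agree_def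
  proof (intro allI impI)
    fix i assume "- int k \<le> i \<and> i \<le> int k"
    then have "nat \<bar>i\<bar> \<le> k" by auto
    with that have n: "n \<in> S (Suc (nat \<bar>i\<bar>))" using dec by blast
    have "(SOME n. n \<in> S (Suc (nat \<bar>i\<bar>))) \<in> S (Suc (nat \<bar>i\<bar>))"
      using inf by (metis finite.emptyI some_in_eq)
    from const[OF n this] show "f n i = z i"
      unfolding z_def by (rule agreeD) simp
  qed
  moreover have "\<exists>n\<ge>M. n \<in> S (Suc k)" for M k
    using inf unfolding infinite_nat_iff_unbounded_le by blast
  ultimately show ?thesis
    unfolding cluster_point_def by blast
qed

lemma cluster_point_pair_exists:
  fixes f g :: "nat \<Rightarrow> int \<Rightarrow> 'a::finite"
  shows "\<exists>z z'. cluster_point (\<lambda>n i. (f n i, g n i)) (\<lambda>i. (z i, z' i))"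
proof -
  obtain w where "cluster_point (\<lambda>n i. (f n i, g n i)) w"
    using cluster_point_exists by blast
  then have "cluster_point (\<lambda>n i. (f n i, g n i)) (\<lambda>i. (fst (w i), snd (w i)))"
    by simp
  then show ?thesis by (intro exI)
qed

section \<open>Shifts and irreducibility\<close>

lemma shiftn_shiftn [simp]: "shiftn a (shiftn b x) = shiftn (a + b) x"
  by (simp add: shiftn_def ac_simps)

lemma shiftn_0 [simp]: "shiftn 0 x = x"
  by (simp add: shiftn_def)

lemma shiftn_uminus_shiftn [simp]: "shiftn (- j) (shiftn j x) = x"
  by simp

lemma inj_shiftn: "inj (shiftn j)"
  by (rule injI) (metis shiftn_uminus_shiftn)

lemma shift_space_shiftn:
  assumes X: "shift_space X" and x: "x \<in> X"
  shows "shiftn j x \<in> X"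
proof -
  have shift_X: "shift ` X = X"
    using X by (simp add: shift_space_def)
  have up: "shift y \<in> X" if "y \<in> X" for y
    using that by (subst shift_X[symmetric]) (rule imageI)
  have down: "shiftn (- 1) y \<in> X" if "y \<in> X" for y
  proof -
    from that obtain y' where "y' \<in> X" "y = shift y'"
      by (subst (asm) shift_X[symmetric]) (rule imageE)
    then show ?thesis by simp
  qed
  show ?thesis
  proof (induction j rule: int_induct[where k = 0])
    case (step1 i)
    from up[OF step1(2)] show ?case by (simp add: add.commute)
  next
    case (step2 i)
    from down[OF step2(2)] show ?case by simp
  qed (use x in simp)
qed

definition central_word :: "nat \<Rightarrow> (int \<Rightarrow> 'a) \<Rightarrow> 'a list" where
  "central_word M y = map (\<lambda>j. y (int j - int M)) [0..<2 * M + 1]"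

lemma length_central_word [simp]: "length (central_word M y) = 2 * M + 1"
  by (simp add: central_word_def)

lemma nth_central_word [simp]: "j < 2 * M + 1 \<Longrightarrow> central_word M y ! j = y (int j - int M)"
  by (simp add: central_word_def del: upt_Suc)

lemma occurs_central_word: "y \<in> Y \<Longrightarrow> occurs (central_word M y) Y"
  unfolding occurs_def central_word_def
  by (rule bexI[of _ y], rule exI[of _ "- int M"]) (auto simp del: upt_Suc simp: algebra_simps)

lemma agree_shiftn_if_central_word_at:
  assumes "\<forall>j<2 * M + 1. z (i + int j) = central_word M y ! j"
  shows "agree M y (shiftn (i + int M) z)"
  unfolding agree_def
proof (intro allI impI)
  fix p assume p: "- int M \<le> p \<and> p \<le> int M"
  define j where "j = nat (p + int M)"
  have j: "j < 2 * M + 1" "int j = p + int M"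
    using p unfolding j_def by linarith+
  then have "z (i + int j) = y (int j - int M)"
    using assms by (metis nth_central_word)
  with j(2) show "y p = shiftn (i + int M) z p"
    by (simp add: shiftn_def algebra_simps)
qed

lemma irreducible_shift_invariant_locally_constant:
  fixes c :: "(int \<Rightarrow> 'a::finite) \<Rightarrow> 'b"
  assumes irr: "irreducible_shift Y" and Y: "shift_space Y"
    and invariant: "\<And>y j. y \<in> Y \<Longrightarrow> c (shiftn j y) = c y"
    and locally_constant: "\<And>y. y \<in> Y \<Longrightarrow> \<exists>M. \<forall>y'\<in>Y. agree M y y' \<longrightarrow> c y' = c y"
    and y0: "y0 \<in> Y" and y1: "y1 \<in> Y"
  shows "c y0 = c y1"
proof -
  obtain M0 where M0: "\<forall>y'\<in>Y. agree M0 y0 y' \<longrightarrow> c y' = c y0"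
    using locally_constant[OF y0] by blast
  obtain M1 where M1: "\<forall>y'\<in>Y. agree M1 y1 y' \<longrightarrow> c y' = c y1"
    using locally_constant[OF y1] by blast
  define u where "u = central_word M0 y0"
  define v where "v = central_word M1 y1"
  obtain w where "occurs (u @ w @ v) Y"
    using irr occurs_central_word[OF y0] occurs_central_word[OF y1]
    unfolding irreducible_shift_def u_def v_def by blast
  then obtain y i where y: "y \<in> Y"
    and at: "\<And>j. j < length (u @ w @ v) \<Longrightarrow> y (i + int j) = (u @ w @ v) ! j"
    unfolding occurs_def by blast
  have "c y0 = c y" if "agree M0 y0 (shiftn p y)" for p
    using M0 that invariant[OF y] shift_space_shiftn[OF Y y] by metis
  moreover have "agree M0 y0 (shiftn (i + int M0) y)"
  proof (rule agree_shiftn_if_central_word_at, intro allI impI)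
    fix j assume "j < 2 * M0 + 1"
    then show "y (i + int j) = central_word M0 y0 ! j"
      using at[of j] by (simp add: u_def nth_append)
  qed
  moreover have "c y1 = c y" if "agree M1 y1 (shiftn p y)" for p
    using M1 that invariant[OF y] shift_space_shiftn[OF Y y] by metis
  moreover have "agree M1 y1 (shiftn (i + int (length u + length w) + int M1) y)"
  proof (rule agree_shiftn_if_central_word_at, intro allI impI)
    fix j assume "j < 2 * M1 + 1"
    then have "y (i + int (length u + length w + j)) = central_word M1 y1 ! j"
      using at[of "length u + length w + j"] by (simp add: v_def nth_append)
    then show "y (i + int (length u + length w) + int j) = central_word M1 y1 ! j"
      by (simp add: add.assoc)
  qed
  ultimately show ?thesis by metis
qed

lemma cluster_point_pair_iff:
  "cluster_point (\<lambda>n i. (f n i, g n i)) (\<lambda>i. (z i, z' i)) \<longleftrightarrow>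
     (\<forall>k M. \<exists>n\<ge>M. agree k (f n) z \<and> agree k (g n) z')"
  by (simp add: cluster_point_def agree_pair_iff)

lemma shift_open_in_cylinder: "shift_open_in X {x\<in>X. agree K a x}"
  unfolding shift_open_in_def by (auto intro: agree_trans)

lemma eq_on_ray_if_windows_determine:
  fixes f g :: "int \<Rightarrow> 'a"
  assumes step: "\<And>c. \<forall>i. c - int N \<le> i \<and> i < c \<longrightarrow> f i = g i \<Longrightarrow> f c = g c"
    and start: "\<forall>i. - int N \<le> i \<and> i < 0 \<longrightarrow> f i = g i"
    and i: "- int N \<le> i"
  shows "f i = g i"
proof -
  have "\<forall>i. - int N \<le> i \<and> i < int m \<longrightarrow> f i = g i" for m
  proof (induction m)
    case (Suc m)
    then have "f (int m) = g (int m)" by (intro step) auto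
    with Suc.IH show ?case
      by (metis int_ops(4) zless_add1_eq)
  qed (use start in simp)
  from this[of "nat (i + 1)"] show ?thesis
    using i by simp
qed

lemma eq_if_windows_determine:
  fixes f g :: "int \<Rightarrow> 'a"
  assumes right: "\<And>c. \<forall>i. c - int N \<le> i \<and> i < c \<longrightarrow> f i = g i \<Longrightarrow> f c = g c"
    and left: "\<And>c. \<forall>i. c < i \<and> i \<le> c + int N \<longrightarrow> f i = g i \<Longrightarrow> f c = g c"
    and "agree N f g"
  shows "f = g"
proof
  fix i
  have center: "- int N \<le> i \<and> i \<le> int N \<Longrightarrow> f i = g i" for i
    using \<open>agree N f g\<close> by (simp add: agree_def)
  have forward: "f i = g i" if "- int N \<le> i" for i
    by (rule eq_on_ray_if_windows_determine[OF right]) (use center that in auto)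
  have backward: "f (- i) = g (- i)" if "- int N \<le> i" for i
  proof (rule eq_on_ray_if_windows_determine[of N "\<lambda>i. f (- i)" "\<lambda>i. g (- i)"])
    fix c assume window: "\<forall>i. c - int N \<le> i \<and> i < c \<longrightarrow> f (- i) = g (- i)"
    show "f (- c) = g (- c)"
    proof (rule left, intro allI impI)
      fix i assume "- c < i \<and> i \<le> - c + int N"
      then show "f i = g i"
        using window[rule_format, of "- i"] by simp
    qed
  qed (use center that in auto)
  show "f i = g i"
    using forward[of i] backward[of "- i"] by (cases "- int N \<le> i") auto
qed

definition fibre_separating :: "(int \<Rightarrow> 'a) set \<Rightarrow> ((int \<Rightarrow> 'a) \<Rightarrow> (int \<Rightarrow> 'b)) \<Rightarrow> nat \<Rightarrow> bool" where
  "fibre_separating X \<phi> N \<longleftrightarrow> (\<forall>x\<in>X. \<forall>x'\<in>X. \<phi> x = \<phi> x' \<longrightarrow> agree N x x' \<longrightarrow> x = x')"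

locale shift_code =
  fixes X :: "(int \<Rightarrow> 'a::finite) set" and Y :: "(int \<Rightarrow> 'b::finite) set"
    and \<phi> :: "(int \<Rightarrow> 'a) \<Rightarrow> (int \<Rightarrow> 'b)"
  assumes shift_space_X: "shift_space X" and shift_space_Y: "shift_space Y"
    and code: "is_code X Y \<phi>"
begin

abbreviation fibre :: "(int \<Rightarrow> 'b) \<Rightarrow> (int \<Rightarrow> 'a) set" where
  "fibre y \<equiv> {x\<in>X. \<phi> x = y}"

lemma closed_X: "(\<And>k. \<exists>x'\<in>X. agree k z x') \<Longrightarrow> z \<in> X"
  using shift_space_X unfolding shift_space_def shift_closed_def by blast

lemma map_in_Y: "x \<in> X \<Longrightarrow> \<phi> x \<in> Y"
  using code unfolding is_code_def by blast

lemma continuous: "x \<in> X \<Longrightarrow> \<exists>m. \<forall>x'\<in>X. agree m x x' \<longrightarrow> agree k (\<phi> x) (\<phi> x')"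
  using code unfolding is_code_def shift_continuous_on_def by blast

lemma shiftn_in_X: "x \<in> X \<Longrightarrow> shiftn j x \<in> X"
  by (rule shift_space_shiftn[OF shift_space_X])

lemma map_shiftn:
  assumes x: "x \<in> X"
  shows "\<phi> (shiftn j x) = shiftn j (\<phi> x)"
proof -
  have commute: "\<phi> (shift x') = shift (\<phi> x')" if "x' \<in> X" for x'
    using code that unfolding is_code_def by blast
  show ?thesis
  proof (induction j rule: int_induct[where k = 0])
    case (step1 i)
    then show ?case
      using commute[OF shiftn_in_X[OF x, of i]] by (simp add: add.commute)
  next
    case (step2 i)
    have "\<phi> (shiftn (i - 1) x) = shiftn (- 1) (shift (\<phi> (shiftn (i - 1) x)))"
      by simp
    also have "\<dots> = shiftn (- 1) (\<phi> (shiftn i x))"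
      using commute[OF shiftn_in_X[OF x, of "i - 1"]] by simp
    also have "\<dots> = shiftn (i - 1) (\<phi> x)"
      using step2.IH by simp
    finally show ?case .
  qed simp
qed

lemma cluster_point_in_X: "(\<And>n. f n \<in> X) \<Longrightarrow> cluster_point f z \<Longrightarrow> z \<in> X"
  unfolding cluster_point_def by (rule closed_X) (meson agree_sym)

lemma cluster_point_map_pair:
  assumes f: "\<And>n. f n \<in> X" and g: "\<And>n. g n \<in> X"
    and cl: "cluster_point (\<lambda>n i. (f n i, g n i)) (\<lambda>i. (z i, z' i))"
  shows "cluster_point (\<lambda>n i. (\<phi> (f n) i, \<phi> (g n) i)) (\<lambda>i. (\<phi> z i, \<phi> z' i))"
  unfolding cluster_point_pair_iff
proof (intro allI)
  fix k M
  have "cluster_point f z" "cluster_point g z'"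
    using cl unfolding cluster_point_pair_iff cluster_point_def by blast+
  then have "z \<in> X" "z' \<in> X"
    using f g by (blast intro: cluster_point_in_X)+
  then obtain m m' where
    m: "\<forall>x\<in>X. agree m z x \<longrightarrow> agree k (\<phi> z) (\<phi> x)" and
    m': "\<forall>x\<in>X. agree m' z' x \<longrightarrow> agree k (\<phi> z') (\<phi> x)"
    using continuous by meson
  obtain n where "n \<ge> M" "agree (max m m') (f n) z" "agree (max m m') (g n) z'"
    using cl unfolding cluster_point_pair_iff by blast
  with m m' f g show "\<exists>n\<ge>M. agree k (\<phi> (f n)) (\<phi> z) \<and> agree k (\<phi> (g n)) (\<phi> z')"
    by (meson agree_mono agree_sym max.cobounded1 max.cobounded2)
qed

lemma cluster_point_map:
  "(\<And>n. f n \<in> X) \<Longrightarrow> cluster_point f z \<Longrightarrow> cluster_point (\<lambda>n. \<phi> (f n)) (\<phi> z)"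
  using cluster_point_map_pair[of f f z z]
  unfolding cluster_point_pair_iff cluster_point_def by blast

lemma cluster_point_map_eq:
  assumes "\<And>n. f n \<in> X" "\<And>n. g n \<in> X" "\<And>n. \<phi> (f n) = \<phi> (g n)"
    and "cluster_point (\<lambda>n i. (f n i, g n i)) (\<lambda>i. (z i, z' i))"
  shows "\<phi> z = \<phi> z'"
proof (rule eq_if_agree_all)
  fix k
  obtain n where "agree k (\<phi> (f n)) (\<phi> z)" "agree k (\<phi> (g n)) (\<phi> z')"
    using cluster_point_map_pair[OF assms(1,2,4)] unfolding cluster_point_pair_iff by blast
  with assms(3) show "agree k (\<phi> z) (\<phi> z')"
    by (metis agree_sym agree_trans)
qed

section \<open>Bi-closing codes are separating\<close>

lemma uniform_determination:
  assumes determined: "\<And>x x'. x \<in> X \<Longrightarrow> x' \<in> X \<Longrightarrow> \<phi> x = \<phi> x' \<Longrightarrow>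
      \<forall>i\<in>A. x i = x' i \<Longrightarrow> x 0 = x' 0"
  shows "\<exists>N. \<forall>x\<in>X. \<forall>x'\<in>X. \<phi> x = \<phi> x' \<longrightarrow>
      (\<forall>i\<in>A. \<bar>i\<bar> \<le> int N \<longrightarrow> x i = x' i) \<longrightarrow> x 0 = x' 0"
proof (rule ccontr)
  assume "\<not> ?thesis"
  then have "\<forall>N. \<exists>x x'. x \<in> X \<and> x' \<in> X \<and> \<phi> x = \<phi> x' \<and>
      (\<forall>i\<in>A. \<bar>i\<bar> \<le> int N \<longrightarrow> x i = x' i) \<and> x 0 \<noteq> x' 0"
    by blast
  then obtain f g where f: "\<And>N. f N \<in> X" and g: "\<And>N. g N \<in> X"
    and eq: "\<And>N. \<phi> (f N) = \<phi> (g N)"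
    and window: "\<And>N. \<forall>i\<in>A. \<bar>i\<bar> \<le> int N \<longrightarrow> f N i = g N i"
    and origin: "\<And>N. f N 0 \<noteq> g N 0"
    by metis
  obtain z z' where cl: "cluster_point (\<lambda>n i. (f n i, g n i)) (\<lambda>i. (z i, z' i))"
    using cluster_point_pair_exists by blast
  then have near: "\<And>k M. \<exists>n\<ge>M. agree k (f n) z \<and> agree k (g n) z'"
    unfolding cluster_point_pair_iff by blast
  have "cluster_point f z" "cluster_point g z'"
    using near unfolding cluster_point_def by blast+
  then have "z \<in> X" "z' \<in> X"
    using f g cluster_point_in_X by blast+
  moreover have "\<phi> z = \<phi> z'"
    using f g eq cl by (rule cluster_point_map_eq)
  moreover have "z i = z' i" if "i \<in> A" for i
  proof -
    obtain n where n: "n \<ge> nat \<bar>i\<bar>"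
      and "agree (nat \<bar>i\<bar>) (f n) z" "agree (nat \<bar>i\<bar>) (g n) z'"
      using near by blast
    then have "f n i = z i" "g n i = z' i"
      by (simp_all add: agreeD)
    moreover have "f n i = g n i"
      using window[of n] that n by simp
    ultimately show ?thesis by simp
  qed
  moreover have "z 0 \<noteq> z' 0"
  proof -
    obtain n where "agree 0 (f n) z" "agree 0 (g n) z'"
      using near by blast
    then have "f n 0 = z 0" "g n 0 = z' 0"
      by (simp_all add: agreeD)
    with origin[of n] show ?thesis by simp
  qed
  ultimately show False
    using determined by blast
qed

lemma right_closing_determines_from_past:
  assumes "right_closing X \<phi>"
  shows "\<exists>N. \<forall>x\<in>X. \<forall>x'\<in>X. \<phi> x = \<phi> x' \<longrightarrow>
      (\<forall>i. - int N \<le> i \<and> i < 0 \<longrightarrow> x i = x' i) \<longrightarrow> x 0 = x' 0"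
proof -
  have "x = x'" if "x \<in> X" "x' \<in> X" "\<phi> x = \<phi> x'" "\<forall>i\<in>{..<0}. x i = x' i" for x x'
  proof -
    have "agree k (shiftn (- int n) x) (shiftn (- int n) x')" if "n \<ge> Suc k" for k n
      using that \<open>\<forall>i\<in>{..<0}. x i = x' i\<close> by (auto simp: agree_def shiftn_def)
    then have "left_asymptotic x x'"
      unfolding left_asymptotic_def by blast
    with assms that(1-3) show ?thesis
      unfolding right_closing_def by blast
  qed
  then obtain N where "\<forall>x\<in>X. \<forall>x'\<in>X. \<phi> x = \<phi> x' \<longrightarrow>
      (\<forall>i\<in>{..<0}. \<bar>i\<bar> \<le> int N \<longrightarrow> x i = x' i) \<longrightarrow> x 0 = x' 0"
    using uniform_determination[of "{..<0}"] by metis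
  then show ?thesis
    by (intro exI[of _ N]) auto
qed

lemma left_closing_determines_from_future:
  assumes "left_closing X \<phi>"
  shows "\<exists>N. \<forall>x\<in>X. \<forall>x'\<in>X. \<phi> x = \<phi> x' \<longrightarrow>
      (\<forall>i. 0 < i \<and> i \<le> int N \<longrightarrow> x i = x' i) \<longrightarrow> x 0 = x' 0"
proof -
  have "x = x'" if "x \<in> X" "x' \<in> X" "\<phi> x = \<phi> x'" "\<forall>i\<in>{0<..}. x i = x' i" for x x'
  proof -
    have "agree k (shiftn (int n) x) (shiftn (int n) x')" if "n \<ge> Suc k" for k n
      using that \<open>\<forall>i\<in>{0<..}. x i = x' i\<close> by (auto simp: agree_def shiftn_def)
    then have "right_asymptotic x x'"
      unfolding right_asymptotic_def by blast
    with assms that(1-3) show ?thesis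
      unfolding left_closing_def by blast
  qed
  then obtain N where "\<forall>x\<in>X. \<forall>x'\<in>X. \<phi> x = \<phi> x' \<longrightarrow>
      (\<forall>i\<in>{0<..}. \<bar>i\<bar> \<le> int N \<longrightarrow> x i = x' i) \<longrightarrow> x 0 = x' 0"
    using uniform_determination[of "{0<..}"] by metis
  then show ?thesis
    by (intro exI[of _ N]) auto
qed

lemma bi_closing_imp_fibre_separating:
  assumes "bi_closing X \<phi>"
  shows "\<exists>N. fibre_separating X \<phi> N"
proof -
  obtain NR where NR: "\<forall>x\<in>X. \<forall>x'\<in>X. \<phi> x = \<phi> x' \<longrightarrow>
      (\<forall>i. - int NR \<le> i \<and> i < 0 \<longrightarrow> x i = x' i) \<longrightarrow> x 0 = x' 0"
    using assms right_closing_determines_from_past unfolding bi_closing_def by blast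
  obtain NL where NL: "\<forall>x\<in>X. \<forall>x'\<in>X. \<phi> x = \<phi> x' \<longrightarrow>
      (\<forall>i. 0 < i \<and> i \<le> int NL \<longrightarrow> x i = x' i) \<longrightarrow> x 0 = x' 0"
    using assms left_closing_determines_from_future unfolding bi_closing_def by blast
  define N where "N = max NR NL"
  have "x = x'" if x: "x \<in> X" and x': "x' \<in> X" and eq: "\<phi> x = \<phi> x'" and "agree N x x'" for x x'
  proof (rule eq_if_windows_determine[of N])
    have shifted: "shiftn c x \<in> X" "shiftn c x' \<in> X" "\<phi> (shiftn c x) = \<phi> (shiftn c x')" for c
      using x x' eq by (simp_all add: shiftn_in_X map_shiftn)
    fix c
    show "x c = x' c" if "\<forall>i. c - int N \<le> i \<and> i < c \<longrightarrow> x i = x' i"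
    proof -
      have "\<forall>i. - int NR \<le> i \<and> i < 0 \<longrightarrow> shiftn c x i = shiftn c x' i"
        using that by (auto simp: shiftn_def N_def)
      with NR shifted(1-3)[of c] have "shiftn c x 0 = shiftn c x' 0"
        by blast
      then show ?thesis
        by (simp add: shiftn_def)
    qed
    show "x c = x' c" if "\<forall>i. c < i \<and> i \<le> c + int N \<longrightarrow> x i = x' i"
    proof -
      have "\<forall>i. 0 < i \<and> i \<le> int NL \<longrightarrow> shiftn c x i = shiftn c x' i"
        using that by (auto simp: shiftn_def N_def)
      with NL shifted(1-3)[of c] have "shiftn c x 0 = shiftn c x' 0"
        by blast
      then show ?thesis
        by (simp add: shiftn_def)
    qed
  qed fact
  then show ?thesis
    unfolding fibre_separating_def by blast
qed

lemma fibre_separating_shiftn: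
  assumes "fibre_separating X \<phi> N" "x \<in> X" "x' \<in> X" "\<phi> x = \<phi> x'"
    and "agree N (shiftn j x) (shiftn j x')"
  shows "x = x'"
proof -
  have "shiftn j x = shiftn j x'"
    using assms(1,5) shiftn_in_X[OF assms(2)] shiftn_in_X[OF assms(3)]
      map_shiftn[OF assms(2)] map_shiftn[OF assms(3)] assms(4)
    unfolding fibre_separating_def by auto
  then show ?thesis
    by (rule injD[OF inj_shiftn])
qed

lemma fibre_separating_imp_bi_closing:
  assumes "fibre_separating X \<phi> N"
  shows "bi_closing X \<phi>"
  unfolding bi_closing_def right_closing_def left_closing_def
proof (intro conjI ballI impI notI)
  fix x x' assume "x \<in> X" "x' \<in> X" "x \<noteq> x' \<and> left_asymptotic x x'" "\<phi> x = \<phi> x'"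
  moreover obtain n where "agree N (shiftn (- int n) x) (shiftn (- int n) x')"
    using \<open>x \<noteq> x' \<and> left_asymptotic x x'\<close> unfolding left_asymptotic_def by blast
  ultimately show False
    using fibre_separating_shiftn[OF assms] by blast
next
  fix x x' assume "x \<in> X" "x' \<in> X" "x \<noteq> x' \<and> right_asymptotic x x'" "\<phi> x = \<phi> x'"
  moreover obtain n where "agree N (shiftn (int n) x) (shiftn (int n) x')"
    using \<open>x \<noteq> x' \<and> right_asymptotic x x'\<close> unfolding right_asymptotic_def by blast
  ultimately show False
    using fibre_separating_shiftn[OF assms] by blast
qed

lemma bi_closing_iff_fibre_separating: "bi_closing X \<phi> \<longleftrightarrow> (\<exists>N. fibre_separating X \<phi> N)"
  using bi_closing_imp_fibre_separating fibre_separating_imp_bi_closing by blast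

section \<open>Fibres and their central blocks\<close>

lemma fibre_shiftn: "fibre (shiftn j y) = shiftn j ` fibre y"
proof (intro equalityI subsetI)
  fix x assume x: "x \<in> fibre (shiftn j y)"
  then have "shiftn (- j) x \<in> fibre y"
    by (simp add: shiftn_in_X map_shiftn)
  moreover have "x = shiftn j (shiftn (- j) x)"
    by simp
  ultimately show "x \<in> shiftn j ` fibre y"
    by blast
qed (auto simp: shiftn_in_X map_shiftn)

lemma card_fibre_shiftn: "card (fibre (shiftn j y)) = card (fibre y)"
  unfolding fibre_shiftn by (rule card_image) (rule inj_on_subset[OF inj_shiftn, OF subset_UNIV])

lemma fibre_separating_inj_on_central_block:
  "fibre_separating X \<phi> N \<Longrightarrow> N \<le> K \<Longrightarrow> inj_on (central_block K) (fibre y)"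
  unfolding inj_on_def fibre_separating_def central_block_eq_iff
  by (blast intro: agree_mono)

lemma fibre_separating_finite_fibre:
  assumes "fibre_separating X \<phi> N"
  shows "finite (fibre y)"
  using finite_central_blocks fibre_separating_inj_on_central_block[OF assms order_refl]
  by (rule finite_imageD)

lemma central_blocks_fibre_upper:
  "\<exists>M. \<forall>y'. agree M y y' \<longrightarrow> central_block K ` fibre y' \<subseteq> central_block K ` fibre y"
proof (rule ccontr)
  assume "\<not> ?thesis"
  then have "\<forall>M. \<exists>x. x \<in> X \<and> agree M y (\<phi> x) \<and> central_block K x \<notin> central_block K ` fibre y"
    by blast
  from choice[OF this] obtain s where
    "\<forall>M. s M \<in> X \<and> agree M y (\<phi> (s M)) \<and> central_block K (s M) \<notin> central_block K ` fibre y"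
    by blast
  then have s: "\<And>M. s M \<in> X" and near: "\<And>M. agree M y (\<phi> (s M))"
    and new: "\<And>M. central_block K (s M) \<notin> central_block K ` fibre y"
    by simp_all
  obtain z where cl: "cluster_point s z"
    using cluster_point_exists by blast
  have "z \<in> X"
    using s cl by (rule cluster_point_in_X)
  have "\<phi> z = y"
  proof (rule sym, rule eq_if_agree_all)
    fix k
    obtain n where "n \<ge> k" "agree k (\<phi> (s n)) (\<phi> z)"
      using cluster_point_map[OF s cl] unfolding cluster_point_def by blast
    with near[of n] show "agree k y (\<phi> z)"
      by (meson agree_mono agree_trans)
  qed
  obtain n where "agree K (s n) z"
    using cl unfolding cluster_point_def by blast
  with \<open>z \<in> X\<close> \<open>\<phi> z = y\<close> new[of n] show False
    unfolding central_block_eq_iff[symmetric] by blast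
qed

lemma central_blocks_fibre_lower:
  assumes "open_code X Y \<phi>" and "finite F" and "F \<subseteq> fibre y"
  shows "\<exists>M. \<forall>y'\<in>Y. agree M y y' \<longrightarrow> central_block K ` F \<subseteq> central_block K ` fibre y'"
  using assms(2,3)
proof (induction F rule: finite_induct)
  case (insert a F)
  have "shift_open_in Y (\<phi> ` {x\<in>X. agree K a x})"
    using assms(1) shift_open_in_cylinder unfolding open_code_def by blast
  moreover have "y \<in> \<phi> ` {x\<in>X. agree K a x}"
    using insert.prems by force
  ultimately obtain M1 where M1: "\<forall>y'\<in>Y. agree M1 y y' \<longrightarrow> y' \<in> \<phi> ` {x\<in>X. agree K a x}"
    unfolding shift_open_in_def by blast
  obtain M2 where M2: "\<forall>y'\<in>Y. agree M2 y y' \<longrightarrow> central_block K ` F \<subseteq> central_block K ` fibre y'"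
    using insert by blast
  have "central_block K ` insert a F \<subseteq> central_block K ` fibre y'"
    if "y' \<in> Y" "agree (max M1 M2) y y'" for y'
  proof -
    from M1 that have "y' \<in> \<phi> ` {x\<in>X. agree K a x}"
      by (meson agree_mono max.cobounded1)
    then obtain x where "x \<in> fibre y'" "central_block K a = central_block K x"
      unfolding central_block_eq_iff by blast
    moreover have "central_block K ` F \<subseteq> central_block K ` fibre y'"
      using M2 that by (meson agree_mono max.cobounded2)
    ultimately show ?thesis by auto
  qed
  then show ?case by blast
qed simp

lemma fibre_separating_if_locally_injective:
  assumes local: "\<And>y. y \<in> Y \<Longrightarrow>
      \<exists>K M. \<forall>y'\<in>Y. agree M y y' \<longrightarrow> inj_on (central_block K) (fibre y')"
  shows "\<exists>N. fibre_separating X \<phi> N"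
proof (rule ccontr)
  assume "\<not> ?thesis"
  then have "\<forall>N. \<exists>x x'. x \<in> X \<and> x' \<in> X \<and> \<phi> x = \<phi> x' \<and> agree N x x' \<and> x \<noteq> x'"
    unfolding fibre_separating_def by blast
  then obtain f g where f: "\<And>N. f N \<in> X" and g: "\<And>N. g N \<in> X"
    and eq: "\<And>N. \<phi> (f N) = \<phi> (g N)" and close: "\<And>N. agree N (f N) (g N)"
    and distinct: "\<And>N. f N \<noteq> g N"
    by metis
  obtain z where cl: "cluster_point f z"
    using cluster_point_exists by blast
  have "\<phi> z \<in> Y"
    using cluster_point_in_X[OF f cl] by (rule map_in_Y)
  then obtain K M where inj: "\<forall>y'\<in>Y. agree M (\<phi> z) y' \<longrightarrow> inj_on (central_block K) (fibre y')"
    using local by blast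
  obtain n where "n \<ge> K" and "agree M (\<phi> (f n)) (\<phi> z)"
    using cluster_point_map[OF f cl] unfolding cluster_point_def by blast
  then have "inj_on (central_block K) (fibre (\<phi> (f n)))"
    using inj map_in_Y[OF f] by (blast intro: agree_sym)
  moreover have "central_block K (f n) = central_block K (g n)"
    unfolding central_block_eq_iff using close \<open>n \<ge> K\<close> by (rule agree_mono)
  ultimately show False
    using f g eq distinct by (metis (mono_tags, lifting) inj_onD mem_Collect_eq)
qed

lemma open_constant_to_one_imp_bi_closing:
  assumes "open_code X Y \<phi>" and "constant_to_one X Y \<phi>"
  shows "bi_closing X \<phi>"
proof -
  obtain d where d: "\<And>y. y \<in> Y \<Longrightarrow> finite (fibre y) \<and> card (fibre y) = d"
    using assms(2) unfolding constant_to_one_def by blast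
  have "\<exists>K M. \<forall>y'\<in>Y. agree M y y' \<longrightarrow> inj_on (central_block K) (fibre y')"
    if y: "y \<in> Y" for y
  proof -
    obtain K where K: "inj_on (central_block K) (fibre y)"
      using finite_imp_inj_on_central_block d[OF y] by blast
    obtain M where M: "\<forall>y'\<in>Y. agree M y y' \<longrightarrow>
        central_block K ` fibre y \<subseteq> central_block K ` fibre y'"
      using central_blocks_fibre_lower[OF assms(1)] d[OF y] by blast
    have "inj_on (central_block K) (fibre y')" if "y' \<in> Y" "agree M y y'" for y'
    proof -
      have "d = card (central_block K ` fibre y)"
        using card_image[OF K] d[OF y] by simp
      also have "\<dots> \<le> card (central_block K ` fibre y')"
        using M that d[OF \<open>y' \<in> Y\<close>] by (intro card_mono) auto
      finally have "card (fibre y') \<le> card (central_block K ` fibre y')"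
        using d[OF \<open>y' \<in> Y\<close>] by simp
      then show ?thesis
        using d[OF \<open>y' \<in> Y\<close>] card_image_le[of "fibre y'" "central_block K"]
        by (simp add: inj_on_iff_eq_card)
    qed
    then show ?thesis by blast
  qed
  then show ?thesis
    using fibre_separating_if_locally_injective bi_closing_iff_fibre_separating by blast
qed

lemma open_bi_closing_imp_constant_to_one:
  assumes "irreducible_shift Y" and "open_code X Y \<phi>" and "bi_closing X \<phi>"
  shows "constant_to_one X Y \<phi>"
proof -
  obtain N where N: "fibre_separating X \<phi> N"
    using assms(3) bi_closing_iff_fibre_separating by blast
  have blocks_inj: "inj_on (central_block N) (fibre y)" for y
    using fibre_separating_inj_on_central_block[OF N order_refl] .
  have "\<exists>M. \<forall>y'\<in>Y. agree M y y' \<longrightarrow> card (fibre y') = card (fibre y)" if "y \<in> Y" for y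
  proof -
    obtain M1 where M1: "\<forall>y'. agree M1 y y' \<longrightarrow>
        central_block N ` fibre y' \<subseteq> central_block N ` fibre y"
      using central_blocks_fibre_upper by blast
    obtain M2 where M2: "\<forall>y'\<in>Y. agree M2 y y' \<longrightarrow>
        central_block N ` fibre y \<subseteq> central_block N ` fibre y'"
      using central_blocks_fibre_lower[OF assms(2) fibre_separating_finite_fibre[OF N]] by blast
    have "card (fibre y') = card (fibre y)" if "y' \<in> Y" "agree (max M1 M2) y y'" for y'
    proof -
      have "agree M1 y y'" "agree M2 y y'"
        using that(2) by (auto intro: agree_mono)
      then have "central_block N ` fibre y' = central_block N ` fibre y"
        using M1 M2 that(1) by blast
      then show ?thesis
        by (simp add: card_image[OF blocks_inj, symmetric])
    qed
    then show ?thesis by blast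
  qed
  moreover have "card (fibre (shiftn j y)) = card (fibre y)" for y j
    by (rule card_fibre_shiftn)
  ultimately have same_card: "card (fibre y) = card (fibre y0)" if "y \<in> Y" "y0 \<in> Y" for y y0
    using irreducible_shift_invariant_locally_constant[OF assms(1) shift_space_Y,
        of "\<lambda>y. card (fibre y)"] that by blast
  show ?thesis
  proof (cases "Y = {}")
    case False
    then obtain y0 where "y0 \<in> Y" by blast
    then show ?thesis
      unfolding constant_to_one_def
      using same_card fibre_separating_finite_fibre[OF N] by blast
  qed (simp add: constant_to_one_def)
qed

lemma constant_to_one_bi_closing_imp_open:
  assumes "constant_to_one X Y \<phi>" and "bi_closing X \<phi>"
  shows "open_code X Y \<phi>"
  unfolding open_code_def shift_open_in_def
proof (intro allI impI conjI ballI)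
  fix U assume U: "U \<subseteq> X \<and> (\<forall>x\<in>U. \<exists>k. \<forall>x'\<in>X. agree k x x' \<longrightarrow> x' \<in> U)"
  then show "\<phi> ` U \<subseteq> Y"
    using map_in_Y by blast
  fix y assume "y \<in> \<phi> ` U"
  then obtain x where "x \<in> U" and y: "y = \<phi> x" by blast
  with U have "x \<in> X" "y \<in> Y" by (auto intro: map_in_Y)
  obtain k where k: "\<forall>x'\<in>X. agree k x x' \<longrightarrow> x' \<in> U"
    using U \<open>x \<in> U\<close> by blast
  obtain d where d: "\<And>y. y \<in> Y \<Longrightarrow> finite (fibre y) \<and> card (fibre y) = d"
    using assms(1) unfolding constant_to_one_def by blast
  obtain N where N: "fibre_separating X \<phi> N"
    using assms(2) bi_closing_iff_fibre_separating by blast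
  define K where "K = max k N"
  have card_blocks: "card (central_block K ` fibre y') = d" if "y' \<in> Y" for y'
    using card_image[OF fibre_separating_inj_on_central_block[OF N]] d[OF that] by (simp add: K_def)
  obtain M where M: "\<forall>y'. agree M y y' \<longrightarrow> central_block K ` fibre y' \<subseteq> central_block K ` fibre y"
    using central_blocks_fibre_upper by blast
  have "y' \<in> \<phi> ` U" if "y' \<in> Y" "agree M y y'" for y'
  proof -
    have "central_block K ` fibre y' = central_block K ` fibre y"
      using M that card_blocks[OF that(1)] card_blocks[OF \<open>y \<in> Y\<close>] d[OF \<open>y \<in> Y\<close>]
      by (intro card_subset_eq) auto
    moreover have "central_block K x \<in> central_block K ` fibre y"
      using \<open>x \<in> X\<close> y by blast
    ultimately obtain x' where "x' \<in> fibre y'" "agree K x x'"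
      unfolding central_block_eq_iff[symmetric] by force
    then show ?thesis
      using k by (force simp: K_def intro: agree_mono)
  qed
  then show "\<exists>M. \<forall>y'\<in>Y. agree M y y' \<longrightarrow> y' \<in> \<phi> ` U"
    by blast
qed

end

theorem theorem4p5:
  fixes X :: "(int \<Rightarrow> 'a::finite) set" and Y :: "(int \<Rightarrow> 'b::finite) set"
    and \<phi> :: "(int \<Rightarrow> 'a) \<Rightarrow> (int \<Rightarrow> 'b)"
  assumes "shift_space X" and "shift_space Y" and "irreducible_shift Y"
    and "is_code X Y \<phi>"
  shows "(open_code X Y \<phi> \<and> constant_to_one X Y \<phi> \<longrightarrow> bi_closing X \<phi>) \<and>
         (open_code X Y \<phi> \<and> bi_closing X \<phi> \<longrightarrow> constant_to_one X Y \<phi>) \<and>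
         (constant_to_one X Y \<phi> \<and> bi_closing X \<phi> \<longrightarrow> open_code X Y \<phi>)"
proof -
  interpret shift_code X Y \<phi>
    using assms(1,2,4) by unfold_locales
  show ?thesis
    using open_constant_to_one_imp_bi_closing
      open_bi_closing_imp_constant_to_one[OF assms(3)]
      constant_to_one_bi_closing_imp_open
    by blast
qed

end
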